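(* Let $\lambda,\mu,\alpha>0$. For $x\in\mathbb{Z}^+$ let $\xi_x(t)$, $t\ge0$, denote the Poisson process with uniform catastrophes with parameters $\lambda,\mu,\alpha$ started from $\xi_x(0)=x$ (defined in the context). Then for any integers $0\le x<y$, any $z\in\mathbb{R}$ and any $t\ge0$, $$\mathbf{P}(\xi_y(t)>z)\le\mathbf{P}(\xi_x(t)>z-|x-y|).$$
   Context: Let $\eta$ be a Markov chain on $\mathbb{Z}^+=\{0,1,2,\dots\}$ with transition probabilities $\mathbf{P}(\eta(n+1)=j\mid\eta(n)=i)=\frac{\lambda}{\lambda+\mu}$ if $j=i+1$ (and $i\ge1$), $=\frac{\mu}{i(\lambda+\mu)}$ if $0\le j<i$, $i\neq0$, and $=1$ if $i=0$, $j=1$. Let $\nu(t)$ be a Poisson process of rate $\alpha$ independent of $\eta$. The process $\xi_x(t):=\eta(\nu(t))$ where $\eta(0)=x$ is the Poisson process with uniform catastrophes started at $x$. *)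

theory Defs
  imports "HOL-Probability.Probability"
begin

definition eta_step :: "real \<Rightarrow> real \<Rightarrow> nat \<Rightarrow> nat pmf" where
  "eta_step lam mu i =
     (if i = 0 then return_pmf 1
      else bind_pmf (bernoulli_pmf (lam / (lam + mu)))
             (\<lambda>b. if b then return_pmf (i + 1) else pmf_of_set {0..<i}))"

primrec eta_dist :: "real \<Rightarrow> real \<Rightarrow> nat \<Rightarrow> nat \<Rightarrow> nat pmf" where
  "eta_dist lam mu x 0 = return_pmf x"
| "eta_dist lam mu x (Suc n) = bind_pmf (eta_dist lam mu x n) (eta_step lam mu)"

text \<open>P(xi_x(t) \<in> A) where xi_x(t) = eta(nu(t)), nu a rate-alpha Poisson process
  independent of eta with eta(0) = x: condition on nu(t) = n, which has
  probability exp(-alpha t)(alpha t)^n / n!.\<close>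
definition xi_prob :: "real \<Rightarrow> real \<Rightarrow> real \<Rightarrow> nat \<Rightarrow> real \<Rightarrow> nat set \<Rightarrow> real" where
  "xi_prob lam mu alpha x t A =
     (\<Sum>n. exp (- alpha * t) * (alpha * t) ^ n / fact n
            * measure_pmf.prob (eta_dist lam mu x n) A)"

end

theory Submission
  imports Defs
begin

text \<open>The chains started at \<open>x\<close> and \<open>y = x + d\<close> can be coupled so that the second never
  exceeds the first by more than \<open>d\<close>: both move up together, and for a catastrophe from
  states \<open>i, j > 0\<close> one draws \<open>k\<close> uniformly from \<open>{0..<i*j}\<close> and jumps to \<open>k div j\<close> and
  \<open>k div i\<close>, which are uniform on \<open>{0..<i}\<close> and \<open>{0..<j}\<close>. This dominates the laws of
  \<open>\<eta>(n)\<close> for every \<open>n\<close>, and averaging over the Poisson number of steps preserves it.\<close>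

lemma pmf_of_set_Times:
  assumes "finite A" "A \<noteq> {}" "finite B" "B \<noteq> {}"
  shows "pmf_of_set (A \<times> B) = pair_pmf (pmf_of_set A) (pmf_of_set B)"
proof (rule pmf_eqI)
  fix ab :: "'a \<times> 'b"
  show "pmf (pmf_of_set (A \<times> B)) ab = pmf (pair_pmf (pmf_of_set A) (pmf_of_set B)) ab"
    using assms by (cases ab) (simp add: pmf_pair card_cartesian_product indicator_def)
qed

lemma bij_betw_div_mod_atLeast0LessThan:
  "bij_betw (\<lambda>k. (k div j, k mod j)) {0..<i * j} ({0..<i} \<times> {0..<(j::nat)})"
proof (rule bij_betw_byWitness[where f' = "\<lambda>(a, b). a * j + b"])
  have "a * j + b < i * j" if "a < i" "b < j" for a b
  proof -
    have "a * j + b < (a + 1) * j" using that by simp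
    also have "\<dots> \<le> i * j" using that by (intro mult_right_mono) auto
    finally show ?thesis .
  qed
  then show "(\<lambda>(a, b). a * j + b) ` ({0..<i} \<times> {0..<j}) \<subseteq> {0..<i * j}"
    by auto
  show "(\<lambda>k. (k div j, k mod j)) ` {0..<i * j} \<subseteq> {0..<i} \<times> {0..<j}"
    by (cases "j = 0") (auto simp: less_mult_imp_div_less)
qed auto

lemma map_pmf_div_pmf_of_set:
  assumes "0 < i" "0 < (j::nat)"
  shows "map_pmf (\<lambda>k. k div j) (pmf_of_set {0..<i * j}) = pmf_of_set {0..<i}"
proof -
  have "map_pmf (\<lambda>k. (k div j, k mod j)) (pmf_of_set {0..<i * j})
      = pair_pmf (pmf_of_set {0..<i}) (pmf_of_set {0..<j})"
    using assms
    by (simp add: map_pmf_of_set_bij_betw[OF bij_betw_div_mod_atLeast0LessThan] pmf_of_set_Times)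
  then have "map_pmf fst (map_pmf (\<lambda>k. (k div j, k mod j)) (pmf_of_set {0..<i * j}))
      = pmf_of_set {0..<i}"
    by (simp add: map_fst_pair_pmf)
  then show ?thesis
    by (simp add: pmf.map_comp o_def)
qed

lemma div_le_div_add:
  fixes i j k d :: nat
  assumes "k < i * j" "j \<le> i + d"
  shows "k div i \<le> k div j + d"
proof -
  define q where "q = k div j"
  have "0 < j"
    using assms(1) by (cases "j = 0") auto
  have "q < i"
    using assms(1) unfolding q_def by (simp add: less_mult_imp_div_less)
  have "k < (q + 1) * j"
    unfolding q_def using dividend_less_div_times[OF \<open>0 < j\<close>, of k] by (simp add: algebra_simps)
  also have "\<dots> \<le> (q + 1) * i + (q + 1) * d"
    using mult_le_mono2[OF assms(2), of "q + 1"] by (simp add: algebra_simps)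
  also have "\<dots> \<le> (q + 1) * i + i * d"
    using mult_le_mono1[of "q + 1" i d] \<open>q < i\<close> by simp
  also have "\<dots> = (q + d + 1) * i"
    by (simp add: algebra_simps)
  finally have "k div i < q + d + 1"
    by (rule less_mult_imp_div_less)
  then show ?thesis
    unfolding q_def by simp
qed

lemma rel_pmf_pmf_of_set_atLeast0LessThan:
  assumes "0 < i" "0 < j" "j \<le> i + d"
  shows "rel_pmf (\<lambda>a b. b \<le> a + d) (pmf_of_set {0..<i}) (pmf_of_set {0..<(j::nat)})"
proof (rule rel_pmf.intros[where pq = "map_pmf (\<lambda>k. (k div j, k div i)) (pmf_of_set {0..<i * j})"])
  show "map_pmf fst (map_pmf (\<lambda>k. (k div j, k div i)) (pmf_of_set {0..<i * j})) = pmf_of_set {0..<i}"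
    using assms by (simp add: pmf.map_comp o_def map_pmf_div_pmf_of_set)
  show "map_pmf snd (map_pmf (\<lambda>k. (k div j, k div i)) (pmf_of_set {0..<i * j})) = pmf_of_set {0..<j}"
    using assms map_pmf_div_pmf_of_set[of j i] by (simp add: pmf.map_comp o_def mult.commute)
  show "b \<le> a + d" if "(a, b) \<in> set_pmf (map_pmf (\<lambda>k. (k div j, k div i)) (pmf_of_set {0..<i * j}))"
    for a b
    using that assms div_le_div_add[of _ i j d] by auto
qed

lemma set_pmf_eta_step_le: "b \<in> set_pmf (eta_step lam mu j) \<Longrightarrow> b \<le> Suc j"
  by (auto simp: eta_step_def split: if_splits)

lemma rel_pmf_eta_step:
  assumes "1 \<le> d" "j \<le> i + d"
  shows "rel_pmf (\<lambda>a b. b \<le> a + d) (eta_step lam mu i) (eta_step lam mu j)"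
proof (cases "i = 0 \<or> j = 0")
  case True
  with assms show ?thesis
    by (auto simp: rel_pmf_return_pmf1 rel_pmf_return_pmf2 eta_step_def
        dest!: set_pmf_eta_step_le)
next
  case False
  have "rel_pmf (\<lambda>a b. b \<le> a + d)
      (if up then return_pmf (i + 1) else pmf_of_set {0..<i})
      (if up then return_pmf (j + 1) else pmf_of_set {0..<j})" for up
    using False assms by (simp add: rel_pmf_pmf_of_set_atLeast0LessThan)
  then show ?thesis
    using False unfolding eta_step_def
    by (auto intro!: rel_pmf_bindI[where R = "(=)"] rel_pmf_reflI)
qed

lemma rel_pmf_eta_dist:
  assumes "1 \<le> d" "y \<le> x + d"
  shows "rel_pmf (\<lambda>a b. b \<le> a + d) (eta_dist lam mu x n) (eta_dist lam mu y n)"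
proof (induction n)
  case 0
  show ?case using assms by simp
next
  case (Suc n)
  then show ?case
    by (simp add: rel_pmf_bindI rel_pmf_eta_step[OF assms(1)])
qed

lemma prob_greater_le_of_rel_pmf:
  assumes "rel_pmf (\<lambda>a b. b \<le> a + d) p q"
  shows "measure_pmf.prob q {k. z < real k} \<le> measure_pmf.prob p {k. z - real d < real k}"
proof -
  have "rel_pmf (\<lambda>a b. b \<le> a + d)\<inverse>\<inverse> q p"
    using assms by (simp only: pmf.rel_flip)
  then have "measure_pmf.prob q {k. z < real k}
      \<le> measure_pmf.prob p {a. \<exists>b\<in>{k. z < real k}. (\<lambda>a b. b \<le> a + d)\<inverse>\<inverse> b a}"
    by (rule rel_pmf_measureD)
  also have "\<dots> \<le> measure_pmf.prob p {k. z - real d < real k}"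
    by (intro measure_pmf.finite_measure_mono) auto
  finally show ?thesis .
qed

lemma xi_prob_mono:
  assumes "0 \<le> alpha" "0 \<le> t"
    and "\<And>n. measure_pmf.prob (eta_dist lam mu y n) B \<le> measure_pmf.prob (eta_dist lam mu x n) A"
  shows "xi_prob lam mu alpha y t B \<le> xi_prob lam mu alpha x t A"
proof -
  define w where "w n = exp (- alpha * t) * (alpha * t) ^ n / fact n" for n
  have w_nonneg: "0 \<le> w n" for n
    unfolding w_def using assms by simp
  have "summable w"
    using summable_mult[OF summable_exp[of "alpha * t"], of "exp (- alpha * t)"]
    unfolding w_def by (simp add: field_simps)
  then have summable_weighted: "summable (\<lambda>n. w n * measure_pmf.prob (eta_dist lam mu a n) C)" for a C
    by (rule summable_comparison_test'[where N = 0])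
       (simp add: w_nonneg abs_mult mult_left_le)
  show ?thesis
    unfolding xi_prob_def w_def[symmetric]
    by (intro suminf_le summable_weighted mult_left_mono assms(3) w_nonneg)
qed

theorem corollary4p1:
  fixes lam mu alpha z t :: real and x y :: nat
  assumes "lam > 0" and "mu > 0" and "alpha > 0"
    and "x < y" and "t \<ge> 0"
  shows "xi_prob lam mu alpha y t {k. real k > z}
         \<le> xi_prob lam mu alpha x t {k. real k > z - \<bar>real x - real y\<bar>}"
proof -
  define d where "d = y - x"
  have "rel_pmf (\<lambda>a b. b \<le> a + d) (eta_dist lam mu x n) (eta_dist lam mu y n)" for n
    using \<open>x < y\<close> unfolding d_def by (intro rel_pmf_eta_dist) auto
  then have "measure_pmf.prob (eta_dist lam mu y n) {k. z < real k}
      \<le> measure_pmf.prob (eta_dist lam mu x n) {k. z - real d < real k}" for n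
    by (rule prob_greater_le_of_rel_pmf)
  moreover have "\<bar>real x - real y\<bar> = real d"
    using \<open>x < y\<close> unfolding d_def by simp
  ultimately show ?thesis
    using \<open>alpha > 0\<close> \<open>t \<ge> 0\<close> by (simp add: xi_prob_mono)
qed

end
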